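(* Assume (C1) and (C2). For all $u\in\mathcal{D}$ and all $s,t\ge0$, $$I(u)\ge I(su^++tu^-)+\frac{1-s^q}{q}\langle I'(u),u^+\rangle+\frac{1-t^q}{q}\langle I'(u),u^-\rangle+\Big(\frac{1-s^p}{p}-\frac{1-s^q}{q}\Big)\|u^+\|^p+\Big(\frac{1-t^p}{p}-\frac{1-t^q}{q}\Big)\|u^-\|^p+\sum_{n\in\mathbb{Z}}a(n)\sum_{i=1}^{\frac p2-1}\sum_{j=1}^{i-1}2^{i-j}\big|(\Delta u^+(n))^{p-(i+j)}(\Delta u^-(n))^{i+j}\big|\,\Theta_{i,j},$$ where $$\Theta_{i,j}=\frac{2s^pC_{\frac p2-1}^iC_i^j+s^pC_{\frac p2-1}^{i-1}C_{i-1}^j+2t^pC_{\frac p2-1}^{i-1}C_{i-1}^{j-1}+t^pC_{\frac p2-1}^{i-1}C_{i-1}^j-2s^{p-(i+j)}t^{i+j}C_{\frac p2}^iC_i^j}{2p}\ge0.$$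
   Context: Fix real numbers $p,q,r$ with $1<p<q$, $\frac p2$ a positive integer, and $r\ge1$, and functions $a,b,c:\mathbb{Z}\to(0,+\infty)$. Conditions: - (C1) There is $b_0>0$ with $b(n)\ge b_0$ for all $n$ and $b(n)\to+\infty$ as $|n|\to\infty$. - (C2) There is $c_0>0$ with $c(n)\le c_0$ for all $n$ and $\sum_n c(n)<+\infty$. Notation: - $C_n^k=\binom nk$ is the binomial coefficient. - For a real sequence $u=(u(n))_{n\in\mathbb{Z}}$: $\Delta u(n)=u(n+1)-u(n)$, $u^+(n)=\max\{u(n),0\}$, $u^-(n)=\min\{u(n),0\}$. Spaces: - $E$ is the set of real sequences $u$ with $\|u\|:=\big(\sum_n[a(n)|\Delta u(n)|^p+b(n)|u(n)|^p]\big)^{1/p}<\infty$. - $\mathcal{D}=\{u\in E:\sum_n c(n)|u(n)|^q\ln|u(n)|^r<+\infty\}$, where terms with $u(n)=0$ are read as $0$. For $u,v\in\mathcal{D}$: - $I(u)=\frac1p\|u\|^p+\frac{r}{q^2}\sum_n c(n)|u(n)|^q-\frac1q\sum_n c(n)|u(n)|^q\ln|u(n)|^r$. - $\langle I'(u),v\rangle=\sum_n[a(n)|\Delta u(n)|^{p-2}\Delta u(n)\Delta v(n)+b(n)|u(n)|^{p-2}u(n)v(n)]-\sum_n c(n)|u(n)|^{q-2}u(n)v(n)\ln|u(n)|^r$. *)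

theory Defs
  imports "HOL-Analysis.Analysis"
begin

definition Delta :: "(int \<Rightarrow> real) \<Rightarrow> int \<Rightarrow> real" where
  "Delta u n = u (n + 1) - u n"

definition posp :: "(int \<Rightarrow> real) \<Rightarrow> int \<Rightarrow> real" where
  "posp u n = max (u n) 0"

definition negp :: "(int \<Rightarrow> real) \<Rightarrow> int \<Rightarrow> real" where
  "negp u n = min (u n) 0"

definition Eterm :: "(int \<Rightarrow> real) \<Rightarrow> (int \<Rightarrow> real) \<Rightarrow> real \<Rightarrow> (int \<Rightarrow> real) \<Rightarrow> int \<Rightarrow> real" where
  "Eterm a b p u n = a n * \<bar>Delta u n\<bar> powr p + b n * \<bar>u n\<bar> powr p"

definition inE :: "(int \<Rightarrow> real) \<Rightarrow> (int \<Rightarrow> real) \<Rightarrow> real \<Rightarrow> (int \<Rightarrow> real) \<Rightarrow> bool" where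
  "inE a b p u \<longleftrightarrow> Eterm a b p u summable_on UNIV"

definition normE :: "(int \<Rightarrow> real) \<Rightarrow> (int \<Rightarrow> real) \<Rightarrow> real \<Rightarrow> (int \<Rightarrow> real) \<Rightarrow> real" where
  "normE a b p u = (\<Sum>\<^sub>\<infinity>n. Eterm a b p u n) powr (1 / p)"

text \<open>The set D: u in E and the logarithmic series converges (terms with u n = 0 are 0).\<close>
definition inD :: "(int \<Rightarrow> real) \<Rightarrow> (int \<Rightarrow> real) \<Rightarrow> (int \<Rightarrow> real) \<Rightarrow> real \<Rightarrow> real \<Rightarrow> real
    \<Rightarrow> (int \<Rightarrow> real) \<Rightarrow> bool" where
  "inD a b c p q r u \<longleftrightarrow> inE a b p u \<and>
     (\<lambda>n. c n * \<bar>u n\<bar> powr q * ln (\<bar>u n\<bar> powr r)) summable_on UNIV"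

definition Ifun :: "(int \<Rightarrow> real) \<Rightarrow> (int \<Rightarrow> real) \<Rightarrow> (int \<Rightarrow> real) \<Rightarrow> real \<Rightarrow> real \<Rightarrow> real
    \<Rightarrow> (int \<Rightarrow> real) \<Rightarrow> real" where
  "Ifun a b c p q r u =
     1 / p * normE a b p u powr p
     + r / q\<^sup>2 * (\<Sum>\<^sub>\<infinity>n. c n * \<bar>u n\<bar> powr q)
     - 1 / q * (\<Sum>\<^sub>\<infinity>n. c n * \<bar>u n\<bar> powr q * ln (\<bar>u n\<bar> powr r))"

definition dI :: "(int \<Rightarrow> real) \<Rightarrow> (int \<Rightarrow> real) \<Rightarrow> (int \<Rightarrow> real) \<Rightarrow> real \<Rightarrow> real \<Rightarrow> real
    \<Rightarrow> (int \<Rightarrow> real) \<Rightarrow> (int \<Rightarrow> real) \<Rightarrow> real" where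
  "dI a b c p q r u v =
     (\<Sum>\<^sub>\<infinity>n. a n * \<bar>Delta u n\<bar> powr (p - 2) * Delta u n * Delta v n
            + b n * \<bar>u n\<bar> powr (p - 2) * u n * v n)
     - (\<Sum>\<^sub>\<infinity>n. c n * \<bar>u n\<bar> powr (q - 2) * u n * v n * ln (\<bar>u n\<bar> powr r))"

text \<open>Theta_{i,j}; K stands for p/2 (a natural number), so p = 2K.\<close>
definition Theta :: "real \<Rightarrow> nat \<Rightarrow> real \<Rightarrow> real \<Rightarrow> nat \<Rightarrow> nat \<Rightarrow> real" where
  "Theta p K s t i j =
     (2 * s powr p * real ((K - 1) choose i) * real (i choose j)
      + s powr p * real ((K - 1) choose (i - 1)) * real ((i - 1) choose j)
      + 2 * t powr p * real ((K - 1) choose (i - 1)) * real ((i - 1) choose (j - 1))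
      + t powr p * real ((K - 1) choose (i - 1)) * real ((i - 1) choose j)
      - 2 * s ^ (2 * K - (i + j)) * t ^ (i + j) * real (K choose i) * real (i choose j))
     / (2 * p)"

end

theory Submission
  imports Defs
begin

text \<open>
  Write p = 2K. The inequality holds term by term in n: at each site the difference of the
  two sides is a(n) times a gradient part, plus b(n) times a potential part, plus c(n) times
  a logarithmic part, and each part is nonnegative.

  For the gradient part let X = Delta u+(n) and Y = Delta u-(n). Both are increments of monotone
  functions of u, so XY >= 0, and X + Y = Delta u(n). Expanding (X + Y)^(2K) = ((Y^2 + 2XY) + X^2)^K
  with the binomial theorem twice, and differentiating in Y, writes
  s^(2K) X (X + Y)^(2K-1) + t^(2K) Y (X + Y)^(2K-1) - (sX + tY)^(2K) as a double sum over (i, j).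
  The (i, j) coefficient is a binomial factor times the weighted AM-GM gap
  (1 - m/2K) s^(2K) + (m/2K) t^(2K) - s^(2K-m) t^m >= 0 with m = i + j. For 1 <= j < i < K the
  coefficient equals 2K Theta(i,j); the remaining terms are nonnegative and are dropped. The
  other gradient terms are handled by (1 - s^q)/q <= (1 - s^p)/p. The potential part is the same
  inequality for X = u+(n) and Y = u-(n). The logarithmic part reduces to 1 - z + z ln z >= 0
  with z = s^q or z = t^q.

  Every series involved is dominated by the series defining u in D, or by the sum of c, so the
  pointwise inequality can be summed.
\<close>

lemma even_power_binomial_expansion:
  fixes X Y :: real
  shows "(X + Y) ^ (2 * K) = (\<Sum>i = 0..K. \<Sum>j = 0..i.
           real (K choose i) * real (i choose j) * 2 ^ (i - j) * X ^ (2 * K - i - j) * Y ^ (i + j))"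
proof -
  have "(X + Y)\<^sup>2 = (Y\<^sup>2 + 2 * X * Y) + X\<^sup>2"
    by algebra
  then have "(X + Y) ^ (2 * K) = ((Y\<^sup>2 + 2 * X * Y) + X\<^sup>2) ^ K"
    by (simp add: power_mult)
  also have "\<dots> = (\<Sum>i\<le>K. real (K choose i) * (Y\<^sup>2 + 2 * X * Y) ^ i * (X\<^sup>2) ^ (K - i))"
    by (rule binomial_ring)
  also have "\<dots> = (\<Sum>i\<le>K. \<Sum>j\<le>i.
      real (K choose i) * (real (i choose j) * (Y\<^sup>2) ^ j * (2 * X * Y) ^ (i - j)) * (X\<^sup>2) ^ (K - i))"
    by (simp add: binomial_ring sum_distrib_left sum_distrib_right)
  also have "\<dots> = (\<Sum>i = 0..K. \<Sum>j = 0..i.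
           real (K choose i) * real (i choose j) * 2 ^ (i - j) * X ^ (2 * K - i - j) * Y ^ (i + j))"
    unfolding atMost_atLeast0
  proof (intro sum.cong refl)
    fix i j assume "i \<in> {0..K}" "j \<in> {0..i}"
    then have "2 * K - i - j = (i - j) + 2 * (K - i)" "i + j = 2 * j + (i - j)"
      by auto
    then have "X ^ (2 * K - i - j) = X ^ (i - j) * (X\<^sup>2) ^ (K - i)"
      "Y ^ (i + j) = (Y\<^sup>2) ^ j * Y ^ (i - j)"
      by (metis power_add power_mult)+
    then show "real (K choose i) * (real (i choose j) * (Y\<^sup>2) ^ j * (2 * X * Y) ^ (i - j)) * (X\<^sup>2) ^ (K - i)
        = real (K choose i) * real (i choose j) * 2 ^ (i - j) * X ^ (2 * K - i - j) * Y ^ (i + j)"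
      by (simp add: power_mult_distrib)
  qed
  finally show ?thesis .
qed

lemma even_power_binomial_expansion_weighted:
  fixes X Y :: real
  shows "(\<Sum>i = 0..K. \<Sum>j = 0..i. real (K choose i) * real (i choose j) * 2 ^ (i - j)
            * X ^ (2 * K - i - j) * (real (i + j) * Y ^ (i + j)))
       = real (2 * K) * Y * (X + Y) ^ (2 * K - 1)"
proof -
  define c where "c i j = real (K choose i) * real (i choose j) * 2 ^ (i - j) * X ^ (2 * K - i - j)"
    for i j
  have "((\<lambda>y. \<Sum>i = 0..K. \<Sum>j = 0..i. c i j * y ^ (i + j)) has_real_derivative
          (\<Sum>i = 0..K. \<Sum>j = 0..i. c i j * (real (i + j) * Y ^ (i + j - 1)))) (at Y)"
    by (intro DERIV_sum DERIV_cmult) (metis DERIV_pow One_nat_def)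
  moreover have "((\<lambda>y. \<Sum>i = 0..K. \<Sum>j = 0..i. c i j * y ^ (i + j)) has_real_derivative
          real (2 * K) * (X + Y) ^ (2 * K - 1)) (at Y)"
    unfolding c_def even_power_binomial_expansion[symmetric] by (auto intro!: derivative_eq_intros)
  ultimately have "(\<Sum>i = 0..K. \<Sum>j = 0..i. c i j * (real (i + j) * Y ^ (i + j - 1)))
      = real (2 * K) * (X + Y) ^ (2 * K - 1)"
    by (rule DERIV_unique)
  moreover have "c i j * (real (i + j) * Y ^ (i + j)) = Y * (c i j * (real (i + j) * Y ^ (i + j - 1)))"
    for i j
    by (cases "i + j") auto
  then have "(\<Sum>i = 0..K. \<Sum>j = 0..i. c i j * (real (i + j) * Y ^ (i + j)))
      = Y * (\<Sum>i = 0..K. \<Sum>j = 0..i. c i j * (real (i + j) * Y ^ (i + j - 1)))"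
    unfolding sum_distrib_left by (intro sum.cong refl)
  ultimately show ?thesis
    unfolding c_def[symmetric] by simp
qed

lemma power_weighted_am_gm:
  fixes s t :: real and m P :: nat
  assumes "s \<ge> 0" "t \<ge> 0" "m \<le> P" "P > 0"
  shows "s ^ (P - m) * t ^ m \<le> (1 - real m / real P) * s ^ P + (real m / real P) * t ^ P"
proof (cases "s > 0 \<and> t > 0")
  case True
  have "(s ^ P) powr (1 - real m / real P) = s powr (real P * (1 - real m / real P))"
    using True by (simp add: powr_powr flip: powr_realpow)
  also have "real P * (1 - real m / real P) = real (P - m)"
    using assms by (simp add: of_nat_diff field_simps)
  finally have s_pow: "(s ^ P) powr (1 - real m / real P) = s ^ (P - m)"
    using True by (simp add: powr_realpow)
  have "(t ^ P) powr (real m / real P) = t powr (real P * (real m / real P))"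
    using True by (simp add: powr_powr flip: powr_realpow)
  then have t_pow: "(t ^ P) powr (real m / real P) = t ^ m"
    using True assms by (simp add: powr_realpow)
  have "(s ^ P) powr (1 - real m / real P) * (t ^ P) powr (real m / real P)
      \<le> (1 - real m / real P) * s ^ P + (real m / real P) * t ^ P"
    using True assms by (intro Youngs_inequality_0) auto
  then show ?thesis unfolding s_pow t_pow .
next
  case False
  have rhs_nonneg: "0 \<le> (1 - real m / real P) * s ^ P + (real m / real P) * t ^ P"
    using assms by (intro add_nonneg_nonneg mult_nonneg_nonneg) auto
  from False consider "s = 0" | "t = 0"
    using assms by force
  then show ?thesis
  proof cases
    case 1
    show ?thesis
    proof (cases "m = P")
      case False
      then show ?thesis using 1 assms rhs_nonneg by (simp add: power_0_left)
    qed (use 1 assms in simp)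
  next
    case 2
    show ?thesis
    proof (cases "m = 0")
      case False
      then show ?thesis using 2 rhs_nonneg by (simp add: power_0_left)
    qed (use 2 in simp)
  qed
qed

lemma one_minus_powr_div_antimono:
  fixes s p q :: real
  assumes "s \<ge> 0" "0 < p" "p < q"
  shows "(1 - s powr q) / q \<le> (1 - s powr p) / p"
proof (cases "s = 0")
  case True
  then show ?thesis using assms by (simp add: frac_le)
next
  case False
  then have "s powr q > 0" using assms by simp
  then have "(s powr q) powr (p / q) * 1 powr (1 - p / q) \<le> (p / q) * s powr q + (1 - p / q) * 1"
    using assms by (intro Youngs_inequality_0) auto
  moreover have "(s powr q) powr (p / q) = s powr p"
    using assms by (simp add: powr_powr)
  ultimately have "s powr p \<le> (p / q) * s powr q + (1 - p / q)"
    by simp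
  then have "q * s powr p \<le> q * ((p / q) * s powr q + (1 - p / q))"
    using assms by (intro mult_left_mono) auto
  also have "\<dots> = p * s powr q + (q - p)"
    using assms by (simp add: field_simps)
  finally show ?thesis using assms by (simp add: field_simps)
qed

lemma choose_choose_weight_identities:
  assumes "1 \<le> j" "j \<le> i" "i \<le> K"
  shows "2 * real (K choose i) * real (i choose j) * (real (i + j) / real (2 * K))
      = 2 * real ((K - 1) choose (i - 1)) * real ((i - 1) choose (j - 1))
        + real ((K - 1) choose (i - 1)) * real ((i - 1) choose j)"
    and "2 * real (K choose i) * real (i choose j) * (1 - real (i + j) / real (2 * K))
      = 2 * real ((K - 1) choose i) * real (i choose j)
        + real ((K - 1) choose (i - 1)) * real ((i - 1) choose j)"
proof -
  obtain K' i' j' where KK: "K = Suc K'" "i = Suc i'" "j = Suc j'"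
    using assms by (metis Suc_le_D le_trans One_nat_def)
  have K_absorb: "real (K choose i) * real i = real K * real ((K - 1) choose (i - 1))"
    using Suc_times_binomial_eq[of K' i'] unfolding KK by (metis of_nat_mult diff_Suc_1 mult.commute)
  have i_absorb: "real (i choose j) * real j = real i * real ((i - 1) choose (j - 1))"
    using Suc_times_binomial_eq[of i' j'] unfolding KK by (metis of_nat_mult diff_Suc_1 mult.commute)
  have i_Pascal: "real (i choose j) = real ((i - 1) choose (j - 1)) + real ((i - 1) choose j)"
    unfolding KK by simp
  have K_Pascal: "real (K choose i) = real ((K - 1) choose (i - 1)) + real ((K - 1) choose i)"
    unfolding KK by simp
  have K0: "real K > 0" unfolding KK by simp
  have "real (K choose i) * real (i choose j) * real (i + j)
      = real K * (2 * real ((K - 1) choose (i - 1)) * real ((i - 1) choose (j - 1))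
        + real ((K - 1) choose (i - 1)) * real ((i - 1) choose j))"
    using K_absorb i_absorb i_Pascal unfolding of_nat_add by algebra
  then show A: "2 * real (K choose i) * real (i choose j) * (real (i + j) / real (2 * K))
      = 2 * real ((K - 1) choose (i - 1)) * real ((i - 1) choose (j - 1))
        + real ((K - 1) choose (i - 1)) * real ((i - 1) choose j)"
    using K0 by (simp add: field_simps)
  show "2 * real (K choose i) * real (i choose j) * (1 - real (i + j) / real (2 * K))
      = 2 * real ((K - 1) choose i) * real (i choose j)
        + real ((K - 1) choose (i - 1)) * real ((i - 1) choose j)"
    using A i_Pascal K_Pascal by (simp add: algebra_simps)
qed

definition am_gm_gap :: "nat \<Rightarrow> real \<Rightarrow> real \<Rightarrow> nat \<Rightarrow> real" where
  "am_gm_gap P s t m = (1 - real m / real P) * s ^ P + (real m / real P) * t ^ P - s ^ (P - m) * t ^ m"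

lemma am_gm_gap_nonneg:
  assumes "s \<ge> 0" "t \<ge> 0" "m \<le> P" "P > 0"
  shows "am_gm_gap P s t m \<ge> 0"
  using power_weighted_am_gm[OF assms] unfolding am_gm_gap_def by simp

lemma powr_even_eq_power:
  fixes z :: real
  assumes "K \<ge> 1" "z \<ge> 0"
  shows "z powr (2 * real K) = z ^ (2 * K)"
  using powr_realpow'[OF assms(2), of "2 * K"] assms(1) by simp

lemma abs_powr_even_eq_power:
  fixes z :: real
  assumes "K \<ge> 1"
  shows "\<bar>z\<bar> powr (2 * real K) = z ^ (2 * K)"
  using powr_even_eq_power[OF assms abs_ge_zero[of z]] power_even_abs[of "2 * K" z] by simp

lemma abs_powr_even_minus_two_mult:
  fixes z :: real
  assumes "K \<ge> 1"
  shows "\<bar>z\<bar> powr (2 * real K - 2) * z = z ^ (2 * K - 1)"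
proof (cases "z = 0")
  case False
  have "2 * real K - 2 = real (2 * (K - 1))"
    using assms by (simp add: of_nat_diff)
  then have "\<bar>z\<bar> powr (2 * real K - 2) = \<bar>z\<bar> ^ (2 * (K - 1))"
    using False by (metis powr_realpow zero_less_abs_iff)
  also have "\<dots> = z ^ (2 * (K - 1))"
    by (rule power_even_abs) simp
  finally have "\<bar>z\<bar> powr (2 * real K - 2) * z = z ^ (2 * (K - 1)) * z"
    by simp
  also have "\<dots> = z ^ (2 * K - 1)"
    using assms by (cases K) auto
  finally show ?thesis .
qed (use assms in simp)

lemma Theta_eq_am_gm_gap:
  fixes s t :: real
  assumes "s \<ge> 0" "t \<ge> 0" and ij: "1 \<le> j" "j \<le> i" "i \<le> K"
  shows "Theta (2 * real K) K s t i j
       = real (K choose i) * real (i choose j) * am_gm_gap (2 * K) s t (i + j) / real (2 * K)"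
proof -
  define c where "c = real (K choose i) * real (i choose j)"
  define w where "w = real (i + j) / real (2 * K)"
  have K: "K \<ge> 1" using ij by simp
  have E: "2 * c * w = 2 * real ((K - 1) choose (i - 1)) * real ((i - 1) choose (j - 1))
                       + real ((K - 1) choose (i - 1)) * real ((i - 1) choose j)"
    "2 * c * (1 - w) = 2 * real ((K - 1) choose i) * real (i choose j)
                       + real ((K - 1) choose (i - 1)) * real ((i - 1) choose j)"
    using choose_choose_weight_identities[OF ij] unfolding c_def w_def by (simp_all add: mult.assoc)
  have "s powr (2 * real K) = s ^ (2 * K)" "t powr (2 * real K) = t ^ (2 * K)"
    using assms K powr_even_eq_power by auto
  then have "Theta (2 * real K) K s t i j
      = (s ^ (2 * K) * (2 * real ((K - 1) choose i) * real (i choose j)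
                        + real ((K - 1) choose (i - 1)) * real ((i - 1) choose j))
         + t ^ (2 * K) * (2 * real ((K - 1) choose (i - 1)) * real ((i - 1) choose (j - 1))
                          + real ((K - 1) choose (i - 1)) * real ((i - 1) choose j))
         - 2 * (s ^ (2 * K - (i + j)) * t ^ (i + j)) * c) / (2 * (2 * real K))"
    unfolding Theta_def c_def by (simp add: algebra_simps)
  also have "\<dots> = (s ^ (2 * K) * (2 * c * (1 - w)) + t ^ (2 * K) * (2 * c * w)
                    - 2 * (s ^ (2 * K - (i + j)) * t ^ (i + j)) * c) / (2 * (2 * real K))"
    by (simp only: E)
  also have "\<dots> = c * am_gm_gap (2 * K) s t (i + j) / real (2 * K)"
    unfolding am_gm_gap_def w_def using K by (simp add: field_simps)
  finally show ?thesis unfolding c_def .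
qed

lemma Theta_nonneg:
  fixes s t :: real
  assumes "s \<ge> 0" "t \<ge> 0" "1 \<le> j" "j \<le> i" "i \<le> K"
  shows "Theta (2 * real K) K s t i j \<ge> 0"
  using Theta_eq_am_gm_gap[OF assms] am_gm_gap_nonneg[of s t "i + j" "2 * K"] assms by simp

lemma scaled_power_gap_expansion:
  fixes X Y s t :: real
  assumes K: "K \<ge> 1"
  shows "s ^ (2 * K) * (X * (X + Y) ^ (2 * K - 1)) + t ^ (2 * K) * (Y * (X + Y) ^ (2 * K - 1))
           - (s * X + t * Y) ^ (2 * K)
       = (\<Sum>i = 0..K. \<Sum>j = 0..i. real (K choose i) * real (i choose j) * 2 ^ (i - j)
            * X ^ (2 * K - i - j) * Y ^ (i + j) * am_gm_gap (2 * K) s t (i + j))"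
proof -
  define M where "M i j = real (K choose i) * real (i choose j) * 2 ^ (i - j) * X ^ (2 * K - i - j) * Y ^ (i + j)"
    for i j
  define w where "w i j = real (i + j) / real (2 * K)" for i j :: nat
  have full: "(\<Sum>i = 0..K. \<Sum>j = 0..i. M i j) = (X + Y) * (X + Y) ^ (2 * K - 1)"
    using even_power_binomial_expansion[of X Y K] K unfolding M_def
    by (simp flip: power_Suc)
  have "(\<Sum>i = 0..K. \<Sum>j = 0..i. M i j * w i j)
      = (\<Sum>i = 0..K. \<Sum>j = 0..i. real (K choose i) * real (i choose j) * 2 ^ (i - j)
            * X ^ (2 * K - i - j) * (real (i + j) * Y ^ (i + j))) / real (2 * K)"
    unfolding M_def w_def sum_divide_distrib by (intro sum.cong refl) (simp add: algebra_simps)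
  then have weighted: "(\<Sum>i = 0..K. \<Sum>j = 0..i. M i j * w i j) = Y * (X + Y) ^ (2 * K - 1)"
    unfolding even_power_binomial_expansion_weighted using K by simp
  have coweighted: "(\<Sum>i = 0..K. \<Sum>j = 0..i. M i j * (1 - w i j)) = X * (X + Y) ^ (2 * K - 1)"
    using full weighted by (simp add: sum_subtractf algebra_simps)
  have scaled: "(s * X + t * Y) ^ (2 * K)
      = (\<Sum>i = 0..K. \<Sum>j = 0..i. M i j * (s ^ (2 * K - (i + j)) * t ^ (i + j)))"
    unfolding even_power_binomial_expansion[of "s * X" "t * Y" K] M_def
    by (intro sum.cong refl) (simp add: power_mult_distrib algebra_simps)
  have "s ^ (2 * K) * (X * (X + Y) ^ (2 * K - 1)) + t ^ (2 * K) * (Y * (X + Y) ^ (2 * K - 1))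
           - (s * X + t * Y) ^ (2 * K)
      = (\<Sum>i = 0..K. \<Sum>j = 0..i. M i j * ((1 - w i j) * s ^ (2 * K) + w i j * t ^ (2 * K)
                                          - s ^ (2 * K - (i + j)) * t ^ (i + j)))"
    unfolding coweighted[symmetric] weighted[symmetric] scaled sum_distrib_left
      sum_subtractf[symmetric] sum.distrib[symmetric]
    by (intro sum.cong refl) (simp add: algebra_simps)
  then show ?thesis
    unfolding M_def w_def am_gm_gap_def by (simp add: diff_diff_left)
qed

lemma scaled_power_gap_ge_Theta_sum:
  fixes X Y s t :: real
  assumes K: "K \<ge> 1" and XY: "X \<ge> 0" "Y \<ge> 0" and st: "s \<ge> 0" "t \<ge> 0"
  shows "s ^ (2 * K) * (X * (X + Y) ^ (2 * K - 1)) + t ^ (2 * K) * (Y * (X + Y) ^ (2 * K - 1))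
           - (s * X + t * Y) ^ (2 * K)
       \<ge> real (2 * K) * (\<Sum>i = 1..K - 1. \<Sum>j = 1..i - 1.
              2 ^ (i - j) * (X ^ (2 * K - (i + j)) * Y ^ (i + j)) * Theta (2 * real K) K s t i j)"
proof -
  define T where "T i j = real (K choose i) * real (i choose j) * 2 ^ (i - j)
      * X ^ (2 * K - i - j) * Y ^ (i + j) * am_gm_gap (2 * K) s t (i + j)" for i j
  have T_nonneg: "T i j \<ge> 0" if "j \<le> i" "i \<le> K" for i j
    unfolding T_def using am_gm_gap_nonneg[of s t "i + j" "2 * K"] that K XY st by simp
  have "(\<Sum>i = 1..K - 1. \<Sum>j = 1..i - 1. T i j) \<le> (\<Sum>i = 1..K - 1. \<Sum>j = 0..i. T i j)"
    by (intro sum_mono sum_mono2) (auto intro: T_nonneg)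
  also have "\<dots> \<le> (\<Sum>i = 0..K. \<Sum>j = 0..i. T i j)"
    by (intro sum_mono2 sum_nonneg) (auto intro: T_nonneg)
  finally have "(\<Sum>i = 1..K - 1. \<Sum>j = 1..i - 1. T i j) \<le> (\<Sum>i = 0..K. \<Sum>j = 0..i. T i j)" .
  moreover have "T i j = real (2 * K) * (2 ^ (i - j) * (X ^ (2 * K - (i + j)) * Y ^ (i + j))
                          * Theta (2 * real K) K s t i j)"
    if "i \<in> {1..K - 1}" "j \<in> {1..i - 1}" for i j
  proof -
    have ij: "1 \<le> j" "j \<le> i" "i \<le> K" using that by auto
    show ?thesis
      using Theta_eq_am_gm_gap[OF st ij] K unfolding T_def by (simp add: diff_diff_left)
  qed
  ultimately show ?thesis
    unfolding scaled_power_gap_expansion[OF K] T_def[symmetric] sum_distrib_left by simp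
qed

definition Theta_sum :: "real \<Rightarrow> nat \<Rightarrow> real \<Rightarrow> real \<Rightarrow> real \<Rightarrow> real \<Rightarrow> real" where
  "Theta_sum p K s t x y = (\<Sum>i = 1..K - 1. \<Sum>j = 1..i - 1.
     2 ^ (i - j) * \<bar>x ^ (2 * K - (i + j)) * y ^ (i + j)\<bar> * Theta p K s t i j)"

lemma homogeneous_part_lower_bound_nonneg:
  fixes x y s t p q :: real
  assumes K: "K \<ge> 1" and p: "p = 2 * real K" and pq: "p < q"
    and xy: "x \<ge> 0" "y \<ge> 0" and st: "s \<ge> 0" "t \<ge> 0"
  shows "Theta_sum p K s t x y
       \<le> 1 / p * \<bar>x + y\<bar> powr p - 1 / p * \<bar>s * x + t * y\<bar> powr p
         - (1 - s powr q) / q * (\<bar>x + y\<bar> powr (p - 2) * (x + y) * x)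
         - (1 - t powr q) / q * (\<bar>x + y\<bar> powr (p - 2) * (x + y) * y)
         - ((1 - s powr p) / p - (1 - s powr q) / q) * \<bar>x\<bar> powr p
         - ((1 - t powr p) / p - (1 - t powr q) / q) * \<bar>y\<bar> powr p"
proof -
  define Z where "Z = (x + y) ^ (2 * K - 1)"
  define \<alpha> where "\<alpha> = (1 - s powr p) / p - (1 - s powr q) / q"
  define \<beta> where "\<beta> = (1 - t powr p) / p - (1 - t powr q) / q"
  define G where "G = s ^ (2 * K) * (x * Z) + t ^ (2 * K) * (y * Z) - (s * x + t * y) ^ (2 * K)"
  have "p > 0" using p K by simp
  have "s powr p = s ^ (2 * K)" "t powr p = t ^ (2 * K)"
    using powr_even_eq_power K st p by auto
  moreover have "(x + y) ^ (2 * K) = (x + y) * Z"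
    unfolding Z_def using K by (simp flip: power_Suc)
  ultimately have rhs: "1 / p * \<bar>x + y\<bar> powr p - 1 / p * \<bar>s * x + t * y\<bar> powr p
         - (1 - s powr q) / q * (\<bar>x + y\<bar> powr (p - 2) * (x + y) * x)
         - (1 - t powr q) / q * (\<bar>x + y\<bar> powr (p - 2) * (x + y) * y)
         - \<alpha> * \<bar>x\<bar> powr p - \<beta> * \<bar>y\<bar> powr p
       = 1 / p * G + \<alpha> * (x * Z - x ^ (2 * K)) + \<beta> * (y * Z - y ^ (2 * K))"
    unfolding p abs_powr_even_eq_power[OF K] abs_powr_even_minus_two_mult[OF K] G_def Z_def \<alpha>_def \<beta>_def
    using \<open>p > 0\<close> pq p by (simp add: field_simps)
  have "x ^ (2 * K - 1) \<le> Z" "y ^ (2 * K - 1) \<le> Z"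
    unfolding Z_def using xy by (auto intro: power_mono)
  moreover have "z ^ (2 * K) = z * z ^ (2 * K - 1)" for z :: real
    using K by (simp flip: power_Suc)
  ultimately have "x * Z - x ^ (2 * K) \<ge> 0" "y * Z - y ^ (2 * K) \<ge> 0"
    using xy by (simp_all add: mult_left_mono)
  moreover have "\<alpha> \<ge> 0" "\<beta> \<ge> 0"
    unfolding \<alpha>_def \<beta>_def using one_minus_powr_div_antimono \<open>p > 0\<close> pq st by auto
  moreover have "Theta_sum p K s t x y \<le> 1 / p * G"
    using scaled_power_gap_ge_Theta_sum[OF K xy st] xy \<open>p > 0\<close>
    unfolding G_def Z_def Theta_sum_def p by (simp add: field_simps)
  ultimately show ?thesis
    unfolding \<alpha>_def[symmetric] \<beta>_def[symmetric] rhs by (simp add: add_increasing2)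
qed

lemma Theta_sum_nonneg:
  assumes "p = 2 * real K" "s \<ge> 0" "t \<ge> 0"
  shows "Theta_sum p K s t x y \<ge> 0"
  unfolding Theta_sum_def using assms Theta_nonneg[of s t] by (auto intro!: sum_nonneg)

text \<open>Every term is even in \<open>(x, y)\<close>, so the case \<open>x, y \<le> 0\<close> reduces to \<open>-x, -y \<ge> 0\<close>.\<close>
lemma homogeneous_part_lower_bound:
  fixes x y s t p q :: real
  assumes K: "K \<ge> 1" and p: "p = 2 * real K" and pq: "p < q"
    and xy: "x * y \<ge> 0" and st: "s \<ge> 0" "t \<ge> 0"
  shows "Theta_sum p K s t x y
       \<le> 1 / p * \<bar>x + y\<bar> powr p - 1 / p * \<bar>s * x + t * y\<bar> powr p
         - (1 - s powr q) / q * (\<bar>x + y\<bar> powr (p - 2) * (x + y) * x)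
         - (1 - t powr q) / q * (\<bar>x + y\<bar> powr (p - 2) * (x + y) * y)
         - ((1 - s powr p) / p - (1 - s powr q) / q) * \<bar>x\<bar> powr p
         - ((1 - t powr p) / p - (1 - t powr q) / q) * \<bar>y\<bar> powr p"
proof (cases "x \<ge> 0 \<and> y \<ge> 0")
  case True
  then show ?thesis using homogeneous_part_lower_bound_nonneg[OF K p pq _ _ st] by simp
next
  case False
  with xy have "- x \<ge> 0" "- y \<ge> 0"
    by (auto simp: zero_le_mult_iff)
  moreover have "\<bar>- x - y\<bar> = \<bar>x + y\<bar>" "\<bar>- (s * x) - t * y\<bar> = \<bar>s * x + t * y\<bar>"
    by (simp_all add: abs_minus_commute)
  ultimately show ?thesis
    using homogeneous_part_lower_bound_nonneg[OF K p pq _ _ st, of "- x" "- y"]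
    by (simp add: Theta_sum_def abs_mult power_abs algebra_simps)
qed

lemma abs_powr_minus_two_mult_self:
  fixes z q :: real
  assumes "z \<noteq> 0"
  shows "\<bar>z\<bar> powr (q - 2) * z * z = \<bar>z\<bar> powr q"
proof -
  have "z * z = \<bar>z\<bar> powr 2"
    using assms by (simp add: powr_numeral power2_eq_square flip: power2_abs)
  then have "\<bar>z\<bar> powr (q - 2) * z * z = \<bar>z\<bar> powr (q - 2) * \<bar>z\<bar> powr 2"
    by (simp only: mult.assoc)
  also have "\<dots> = \<bar>z\<bar> powr (q - 2 + 2)"
    by (rule powr_add[symmetric])
  finally show ?thesis by simp
qed

lemma log_part_nonneg:
  fixes W \<sigma> q r :: real
  assumes "W > 0" "\<sigma> \<ge> 0" "q > 0" "r \<ge> 0"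
  shows "0 \<le> r / q\<^sup>2 * W powr q - 1 / q * (W powr q * ln (W powr r))
             - r / q\<^sup>2 * (\<sigma> * W) powr q + 1 / q * ((\<sigma> * W) powr q * ln ((\<sigma> * W) powr r))
             + (1 - \<sigma> powr q) / q * (W powr q * ln (W powr r))"
proof (cases "\<sigma> = 0")
  case False
  define z where "z = \<sigma> powr q"
  have "\<sigma> > 0" using False assms by simp
  then have "z > 0" "ln z = q * ln \<sigma>" unfolding z_def by (simp_all add: ln_powr)
  have "- ln z \<le> 1 / z - 1"
    using ln_le_minus_one[of "1 / z"] \<open>z > 0\<close> by (simp add: ln_div)
  then have "0 \<le> 1 - z + z * ln z"
    using \<open>z > 0\<close> by (simp add: field_simps)
  moreover have "r / q\<^sup>2 * W powr q - 1 / q * (W powr q * ln (W powr r))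
             - r / q\<^sup>2 * (\<sigma> * W) powr q + 1 / q * ((\<sigma> * W) powr q * ln ((\<sigma> * W) powr r))
             + (1 - \<sigma> powr q) / q * (W powr q * ln (W powr r))
      = r / q\<^sup>2 * W powr q * (1 - z + z * ln z)"
    using assms \<open>\<sigma> > 0\<close> \<open>ln z = q * ln \<sigma>\<close> unfolding z_def
    by (simp add: powr_mult ln_powr ln_mult field_simps power2_eq_square)
  ultimately show ?thesis
    using assms by simp
qed (use assms in simp)

lemma log_part_nonneg_split:
  fixes x q r s t :: real
  assumes "q > 0" "r \<ge> 0" "s \<ge> 0" "t \<ge> 0"
  defines "v \<equiv> s * max x 0 + t * min x 0"
  shows "0 \<le> r / q\<^sup>2 * \<bar>x\<bar> powr q - 1 / q * (\<bar>x\<bar> powr q * ln (\<bar>x\<bar> powr r))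
             - r / q\<^sup>2 * \<bar>v\<bar> powr q + 1 / q * (\<bar>v\<bar> powr q * ln (\<bar>v\<bar> powr r))
             + (1 - s powr q) / q * (\<bar>x\<bar> powr (q - 2) * x * max x 0 * ln (\<bar>x\<bar> powr r))
             + (1 - t powr q) / q * (\<bar>x\<bar> powr (q - 2) * x * min x 0 * ln (\<bar>x\<bar> powr r))"
proof (cases x "0 :: real" rule: linorder_cases)
  case less
  then have "\<bar>v\<bar> = t * \<bar>x\<bar>" "max x 0 = 0" "min x 0 = x"
    using assms by (simp_all add: v_def abs_mult)
  then show ?thesis
    using log_part_nonneg[of "\<bar>x\<bar>" t q r] abs_powr_minus_two_mult_self[of x q] less assms by simp
next
  case greater
  then have "\<bar>v\<bar> = s * \<bar>x\<bar>" "max x 0 = x" "min x 0 = 0"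
    using assms by (simp_all add: v_def abs_mult)
  then show ?thesis
    using log_part_nonneg[of "\<bar>x\<bar>" s q r] abs_powr_minus_two_mult_self[of x q] greater assms by simp
qed (simp add: v_def)

lemma posp_add_negp: "posp u n + negp u n = u n"
  unfolding posp_def negp_def by simp

lemma Delta_posp_add_negp: "Delta (posp u) n + Delta (negp u) n = Delta u n"
  unfolding Delta_def posp_def negp_def by simp

lemma Delta_posp_mult_Delta_negp_nonneg: "Delta (posp u) n * Delta (negp u) n \<ge> 0"
  unfolding Delta_def posp_def negp_def
  by (cases "u n \<ge> 0"; cases "u (n + 1) \<ge> 0") (auto simp: zero_le_mult_iff mult_le_0_iff)

lemma Delta_lincomb: "Delta (\<lambda>n. s * f n + t * g n) n = s * Delta f n + t * Delta g n"
  unfolding Delta_def by (simp add: algebra_simps)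

lemma abs_posp_le: "\<bar>posp u n\<bar> \<le> \<bar>u n\<bar>"
  and abs_negp_le: "\<bar>negp u n\<bar> \<le> \<bar>u n\<bar>"
  and abs_Delta_posp_le: "\<bar>Delta (posp u) n\<bar> \<le> \<bar>Delta u n\<bar>"
  and abs_Delta_negp_le: "\<bar>Delta (negp u) n\<bar> \<le> \<bar>Delta u n\<bar>"
  unfolding Delta_def posp_def negp_def by auto

definition I_density :: "(int \<Rightarrow> real) \<Rightarrow> (int \<Rightarrow> real) \<Rightarrow> (int \<Rightarrow> real) \<Rightarrow> real \<Rightarrow> real \<Rightarrow> real
    \<Rightarrow> (int \<Rightarrow> real) \<Rightarrow> int \<Rightarrow> real" where
  "I_density a b c p q r u n =
     1 / p * Eterm a b p u n + r / q\<^sup>2 * (c n * \<bar>u n\<bar> powr q)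
     - 1 / q * (c n * \<bar>u n\<bar> powr q * ln (\<bar>u n\<bar> powr r))"

definition dI_density :: "(int \<Rightarrow> real) \<Rightarrow> (int \<Rightarrow> real) \<Rightarrow> (int \<Rightarrow> real) \<Rightarrow> real \<Rightarrow> real \<Rightarrow> real
    \<Rightarrow> (int \<Rightarrow> real) \<Rightarrow> (int \<Rightarrow> real) \<Rightarrow> int \<Rightarrow> real" where
  "dI_density a b c p q r u v n =
     (a n * \<bar>Delta u n\<bar> powr (p - 2) * Delta u n * Delta v n + b n * \<bar>u n\<bar> powr (p - 2) * u n * v n)
     - c n * \<bar>u n\<bar> powr (q - 2) * u n * v n * ln (\<bar>u n\<bar> powr r)"

lemma I_density_pointwise_ineq:
  fixes u a b c :: "int \<Rightarrow> real" and p q r s t :: real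
  assumes K: "K \<ge> 1" and p: "p = 2 * real K" and pq: "p < q" and r: "r \<ge> 0"
    and abc: "a n \<ge> 0" "b n \<ge> 0" "c n \<ge> 0" and st: "s \<ge> 0" "t \<ge> 0"
  defines "v \<equiv> \<lambda>n. s * posp u n + t * negp u n"
  shows "I_density a b c p q r v n
         + (1 - s powr q) / q * dI_density a b c p q r u (posp u) n
         + (1 - t powr q) / q * dI_density a b c p q r u (negp u) n
         + ((1 - s powr p) / p - (1 - s powr q) / q) * Eterm a b p (posp u) n
         + ((1 - t powr p) / p - (1 - t powr q) / q) * Eterm a b p (negp u) n
         + a n * Theta_sum p K s t (Delta (posp u) n) (Delta (negp u) n)
       \<le> I_density a b c p q r u n"
proof -
  define \<alpha> where "\<alpha> = (1 - s powr p) / p - (1 - s powr q) / q"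
  define \<beta> where "\<beta> = (1 - t powr p) / p - (1 - t powr q) / q"
  have "q > 0" using pq p K by simp
  have gradient: "Theta_sum p K s t (Delta (posp u) n) (Delta (negp u) n)
      \<le> 1 / p * \<bar>Delta u n\<bar> powr p - 1 / p * \<bar>Delta v n\<bar> powr p
        - (1 - s powr q) / q * (\<bar>Delta u n\<bar> powr (p - 2) * Delta u n * Delta (posp u) n)
        - (1 - t powr q) / q * (\<bar>Delta u n\<bar> powr (p - 2) * Delta u n * Delta (negp u) n)
        - \<alpha> * \<bar>Delta (posp u) n\<bar> powr p - \<beta> * \<bar>Delta (negp u) n\<bar> powr p"
    using homogeneous_part_lower_bound[OF K p pq Delta_posp_mult_Delta_negp_nonneg st]
    unfolding v_def Delta_lincomb Delta_posp_add_negp \<alpha>_def \<beta>_def .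
  have "0 \<le> Theta_sum p K s t (posp u n) (negp u n)"
    using Theta_sum_nonneg[OF p st] .
  also have "\<dots> \<le> 1 / p * \<bar>u n\<bar> powr p - 1 / p * \<bar>v n\<bar> powr p
        - (1 - s powr q) / q * (\<bar>u n\<bar> powr (p - 2) * u n * posp u n)
        - (1 - t powr q) / q * (\<bar>u n\<bar> powr (p - 2) * u n * negp u n)
        - \<alpha> * \<bar>posp u n\<bar> powr p - \<beta> * \<bar>negp u n\<bar> powr p"
    using homogeneous_part_lower_bound[OF K p pq _ st, of "posp u n" "negp u n"]
    unfolding v_def posp_add_negp \<alpha>_def \<beta>_def by (simp add: posp_def negp_def)
  finally have potential: "0 \<le> \<dots>" .
  have log: "0 \<le> r / q\<^sup>2 * \<bar>u n\<bar> powr q - 1 / q * (\<bar>u n\<bar> powr q * ln (\<bar>u n\<bar> powr r))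
        - r / q\<^sup>2 * \<bar>v n\<bar> powr q + 1 / q * (\<bar>v n\<bar> powr q * ln (\<bar>v n\<bar> powr r))
        + (1 - s powr q) / q * (\<bar>u n\<bar> powr (q - 2) * u n * posp u n * ln (\<bar>u n\<bar> powr r))
        + (1 - t powr q) / q * (\<bar>u n\<bar> powr (q - 2) * u n * negp u n * ln (\<bar>u n\<bar> powr r))"
    using log_part_nonneg_split[OF \<open>q > 0\<close> r st, of "u n"] unfolding v_def posp_def negp_def .
  from mult_left_mono[OF gradient abc(1)] mult_nonneg_nonneg[OF abc(2) potential]
    mult_nonneg_nonneg[OF abc(3) log]
  show ?thesis
    unfolding I_density_def dI_density_def Eterm_def \<alpha>_def[symmetric] \<beta>_def[symmetric]
    by (simp add: algebra_simps)
qed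

lemma has_sum_diff:
  fixes f g :: "'a \<Rightarrow> real"
  assumes "(f has_sum x) A" "(g has_sum y) A"
  shows "((\<lambda>n. f n - g n) has_sum (x - y)) A"
  using has_sum_add[OF assms(1) has_sum_cmult_right[OF assms(2), of "- 1"]] by simp

lemma summable_on_abs_bound:
  fixes f g :: "'a \<Rightarrow> real"
  assumes "g summable_on A" "\<And>x. x \<in> A \<Longrightarrow> \<bar>f x\<bar> \<le> g x"
  shows "f summable_on A"
proof -
  have "(\<lambda>x. norm (f x)) summable_on A"
    by (rule Infinite_Sum.abs_summable_on_comparison_test') (use assms in auto)
  then show ?thesis
    using summable_on_iff_abs_summable_on_real by blast
qed

lemma Eterm_nonneg: "a n \<ge> 0 \<Longrightarrow> b n \<ge> 0 \<Longrightarrow> Eterm a b p u n \<ge> 0"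
  unfolding Eterm_def by simp

lemma has_sum_normE_powr:
  assumes "p > 0" "\<And>n. a n \<ge> 0" "\<And>n. b n \<ge> 0" "Eterm a b p w summable_on UNIV"
  shows "(Eterm a b p w has_sum normE a b p w powr p) UNIV"
proof -
  have "(\<Sum>\<^sub>\<infinity>n. Eterm a b p w n) \<ge> 0"
    using assms by (intro infsum_nonneg Eterm_nonneg)
  then show ?thesis
    using assms by (simp add: normE_def powr_powr)
qed

lemma has_sum_I_density:
  assumes "p > 0" "\<And>n. a n \<ge> 0" "\<And>n. b n \<ge> 0"
    and "Eterm a b p w summable_on UNIV"
    and "(\<lambda>n. c n * \<bar>w n\<bar> powr q) summable_on UNIV"
    and "(\<lambda>n. c n * \<bar>w n\<bar> powr q * ln (\<bar>w n\<bar> powr r)) summable_on UNIV"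
  shows "(I_density a b c p q r w has_sum Ifun a b c p q r w) UNIV"
  unfolding I_density_def Ifun_def
  by (intro has_sum_diff has_sum_add has_sum_cmult_right[where c = "1 / p"]
      has_sum_cmult_right[where c = "r / q\<^sup>2"] has_sum_cmult_right[where c = "1 / q"]
      has_sum_normE_powr has_sum_infsum assms)

lemma abs_powr_minus_two_mult_le:
  fixes z w p :: real
  assumes "\<bar>w\<bar> \<le> \<bar>z\<bar>"
  shows "\<bar>\<bar>z\<bar> powr (p - 2) * z * w\<bar> \<le> \<bar>z\<bar> powr p"
proof (cases "z = 0")
  case False
  have "\<bar>\<bar>z\<bar> powr (p - 2) * z * w\<bar> = \<bar>z\<bar> powr (p - 2) * \<bar>z\<bar> * \<bar>w\<bar>"
    by (simp add: abs_mult)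
  also have "\<dots> \<le> \<bar>z\<bar> powr (p - 2) * \<bar>z\<bar> * \<bar>z\<bar>"
    using assms by (intro mult_left_mono) auto
  also have "\<dots> = \<bar>z\<bar> powr p"
    using abs_powr_minus_two_mult_self[of "\<bar>z\<bar>" p] False by simp
  finally show ?thesis .
qed (use assms in simp)

lemma has_sum_dI_density:
  assumes abc: "\<And>n. a n \<ge> 0" "\<And>n. b n \<ge> 0" "\<And>n. c n \<ge> 0"
    and u: "Eterm a b p u summable_on UNIV"
      "(\<lambda>n. c n * \<bar>u n\<bar> powr q * ln (\<bar>u n\<bar> powr r)) summable_on UNIV"
    and w: "\<And>n. \<bar>w n\<bar> \<le> \<bar>u n\<bar>" "\<And>n. \<bar>Delta w n\<bar> \<le> \<bar>Delta u n\<bar>"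
  shows "(dI_density a b c p q r u w has_sum dI a b c p q r u w) UNIV"
proof -
  have "(\<lambda>n. a n * \<bar>Delta u n\<bar> powr (p - 2) * Delta u n * Delta w n
             + b n * \<bar>u n\<bar> powr (p - 2) * u n * w n) summable_on UNIV"
  proof (rule summable_on_abs_bound[OF u(1)])
    fix n
    have "\<bar>a n * \<bar>Delta u n\<bar> powr (p - 2) * Delta u n * Delta w n\<bar> \<le> a n * \<bar>Delta u n\<bar> powr p"
      "\<bar>b n * \<bar>u n\<bar> powr (p - 2) * u n * w n\<bar> \<le> b n * \<bar>u n\<bar> powr p"
      using abs_powr_minus_two_mult_le[OF w(2)] abs_powr_minus_two_mult_le[OF w(1)] abc
      by (simp_all add: abs_mult mult.assoc mult_left_mono)
    then show "\<bar>a n * \<bar>Delta u n\<bar> powr (p - 2) * Delta u n * Delta w n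
             + b n * \<bar>u n\<bar> powr (p - 2) * u n * w n\<bar> \<le> Eterm a b p u n"
      unfolding Eterm_def by linarith
  qed
  moreover have "(\<lambda>n. c n * \<bar>u n\<bar> powr (q - 2) * u n * w n * ln (\<bar>u n\<bar> powr r)) summable_on UNIV"
  proof (rule summable_on_abs_bound)
    show "(\<lambda>n. \<bar>c n * \<bar>u n\<bar> powr q * ln (\<bar>u n\<bar> powr r)\<bar>) summable_on UNIV"
      using u(2) summable_on_iff_abs_summable_on_real by force
    fix n
    have "\<bar>c n * \<bar>u n\<bar> powr (q - 2) * u n * w n * ln (\<bar>u n\<bar> powr r)\<bar>
        = c n * (\<bar>\<bar>u n\<bar> powr (q - 2) * u n * w n\<bar> * \<bar>ln (\<bar>u n\<bar> powr r)\<bar>)"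
      using abc(3)[of n] by (simp add: abs_mult)
    also have "\<dots> \<le> c n * (\<bar>u n\<bar> powr q * \<bar>ln (\<bar>u n\<bar> powr r)\<bar>)"
      using abs_powr_minus_two_mult_le[OF w(1), of n q] abc(3)[of n]
      by (intro mult_left_mono mult_right_mono) auto
    also have "\<dots> = \<bar>c n * \<bar>u n\<bar> powr q * ln (\<bar>u n\<bar> powr r)\<bar>"
      using abc(3)[of n] by (simp add: abs_mult)
    finally show "\<bar>c n * \<bar>u n\<bar> powr (q - 2) * u n * w n * ln (\<bar>u n\<bar> powr r)\<bar>
        \<le> \<bar>c n * \<bar>u n\<bar> powr q * ln (\<bar>u n\<bar> powr r)\<bar>" .
  qed
  ultimately show ?thesis
    unfolding dI_density_def dI_def by (intro has_sum_diff has_sum_infsum)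
qed

lemma powr_le_abs_log_term_add_exp:
  fixes W q r :: real
  assumes "W \<ge> 0" "q \<ge> 0" "r \<ge> 1"
  shows "W powr q \<le> \<bar>W powr q * ln (W powr r)\<bar> + exp q"
proof (cases "W \<ge> exp 1")
  case True
  then have "W > 0" "ln W \<ge> 1"
    using exp_gt_zero[of 1] by (linarith, metis ln_exp ln_le_cancel_iff exp_gt_zero less_le_trans)
  then have "ln (W powr r) \<ge> 1"
    using assms by (simp add: ln_powr) (metis mult_mono' mult_1 zero_le_one order_trans)
  then have "W powr q \<le> W powr q * ln (W powr r)"
    by (simp add: mult_le_cancel_left1)
  then show ?thesis
    using abs_ge_self[of "W powr q * ln (W powr r)"] exp_gt_zero[of q] by linarith
next
  case False
  then have "W powr q \<le> exp 1 powr q"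
    using assms by (intro powr_mono2) auto
  then show ?thesis by (simp add: powr_def)
qed

lemma summable_on_c_abs_powr:
  fixes q r :: real
  assumes "c summable_on UNIV" "\<And>n. c n \<ge> 0" "q \<ge> 0" "r \<ge> 1"
    and "(\<lambda>n. c n * \<bar>u n\<bar> powr q * ln (\<bar>u n\<bar> powr r)) summable_on UNIV"
  shows "(\<lambda>n. c n * \<bar>u n\<bar> powr q) summable_on UNIV"
proof (rule summable_on_abs_bound)
  show "(\<lambda>n. \<bar>c n * \<bar>u n\<bar> powr q * ln (\<bar>u n\<bar> powr r)\<bar> + exp q * c n) summable_on UNIV"
    using assms(5) summable_on_iff_abs_summable_on_real
    by (intro summable_on_add summable_on_cmult_right assms(1)) force
  fix n
  have "c n * \<bar>u n\<bar> powr q \<le> c n * (\<bar>\<bar>u n\<bar> powr q * ln (\<bar>u n\<bar> powr r)\<bar> + exp q)"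
    using powr_le_abs_log_term_add_exp[of "\<bar>u n\<bar>" q r] assms(2-4) by (intro mult_left_mono) auto
  then show "\<bar>c n * \<bar>u n\<bar> powr q\<bar> \<le> \<bar>c n * \<bar>u n\<bar> powr q * ln (\<bar>u n\<bar> powr r)\<bar> + exp q * c n"
    using assms(2)[of n] by (simp add: abs_mult algebra_simps)
qed

lemma Eterm_summable_dominated:
  assumes "\<And>n. a n \<ge> 0" "\<And>n. b n \<ge> 0" "C \<ge> 0" "p \<ge> 0"
    and "\<And>n. \<bar>w n\<bar> \<le> C * \<bar>u n\<bar>" "\<And>n. \<bar>Delta w n\<bar> \<le> C * \<bar>Delta u n\<bar>"
    and "Eterm a b p u summable_on UNIV"
  shows "Eterm a b p w summable_on UNIV"
proof (rule summable_on_abs_bound)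
  show "(\<lambda>n. C powr p * Eterm a b p u n) summable_on UNIV"
    using assms(7) by (rule summable_on_cmult_right)
  fix n
  have "\<bar>w n\<bar> powr p \<le> C powr p * \<bar>u n\<bar> powr p" "\<bar>Delta w n\<bar> powr p \<le> C powr p * \<bar>Delta u n\<bar> powr p"
    using powr_mono2[OF assms(4) abs_ge_zero assms(5)] powr_mono2[OF assms(4) abs_ge_zero assms(6)] assms(3)
    by (simp_all add: powr_mult)
  then show "\<bar>Eterm a b p w n\<bar> \<le> C powr p * Eterm a b p u n"
    using assms(1,2)[of n] Eterm_nonneg[of a n b p w]
    unfolding Eterm_def by (simp add: algebra_simps add_mono mult_left_mono)
qed

lemma c_powr_summable_dominated:
  fixes c u w :: "'a \<Rightarrow> real"
  assumes "\<And>n. c n \<ge> 0" "C \<ge> 0" "q \<ge> 0" "\<And>n. \<bar>w n\<bar> \<le> C * \<bar>u n\<bar>"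
    and "(\<lambda>n. c n * \<bar>u n\<bar> powr q) summable_on UNIV"
  shows "(\<lambda>n. c n * \<bar>w n\<bar> powr q) summable_on UNIV"
proof (rule summable_on_abs_bound)
  show "(\<lambda>n. C powr q * (c n * \<bar>u n\<bar> powr q)) summable_on UNIV"
    using assms(5) by (rule summable_on_cmult_right)
  fix n
  have "\<bar>w n\<bar> powr q \<le> C powr q * \<bar>u n\<bar> powr q"
    using powr_mono2[OF assms(3) abs_ge_zero assms(4)] assms(2) by (simp add: powr_mult)
  then show "\<bar>c n * \<bar>w n\<bar> powr q\<bar> \<le> C powr q * (c n * \<bar>u n\<bar> powr q)"
    using assms(1)[of n] by (simp add: abs_mult mult_left_mono algebra_simps)
qed

lemma abs_log_term_scaled_le:
  fixes W \<sigma> q r c :: real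
  assumes "W \<ge> 0" "\<sigma> \<ge> 0" "c \<ge> 0" "r \<ge> 0"
  shows "\<bar>c * (\<sigma> * W) powr q * ln ((\<sigma> * W) powr r)\<bar>
     \<le> \<sigma> powr q * r * \<bar>ln \<sigma>\<bar> * (c * W powr q) + \<sigma> powr q * \<bar>c * W powr q * ln (W powr r)\<bar>"
proof (cases "W = 0 \<or> \<sigma> = 0")
  case False
  then have "c * (\<sigma> * W) powr q * ln ((\<sigma> * W) powr r)
      = \<sigma> powr q * r * ln \<sigma> * (c * W powr q) + \<sigma> powr q * (c * W powr q * ln (W powr r))"
    using assms by (simp add: powr_mult ln_powr ln_mult algebra_simps)
  also have "\<bar>\<dots>\<bar> \<le> \<bar>\<sigma> powr q * r * ln \<sigma> * (c * W powr q)\<bar> + \<bar>\<sigma> powr q * (c * W powr q * ln (W powr r))\<bar>"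
    by (rule abs_triangle_ineq)
  also have "\<dots> = \<sigma> powr q * r * \<bar>ln \<sigma>\<bar> * (c * W powr q) + \<sigma> powr q * \<bar>c * W powr q * ln (W powr r)\<bar>"
    using assms by (simp add: abs_mult)
  finally show ?thesis .
qed (use assms in auto)

lemma log_term_summable_scaled:
  fixes c u w :: "'a \<Rightarrow> real" and q r s t :: real
  assumes "\<And>n. c n \<ge> 0" "r \<ge> 0" "s \<ge> 0" "t \<ge> 0"
    and "\<And>n. \<bar>w n\<bar> = s * \<bar>u n\<bar> \<or> \<bar>w n\<bar> = t * \<bar>u n\<bar>"
    and "(\<lambda>n. c n * \<bar>u n\<bar> powr q) summable_on UNIV"
      "(\<lambda>n. c n * \<bar>u n\<bar> powr q * ln (\<bar>u n\<bar> powr r)) summable_on UNIV"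
  shows "(\<lambda>n. c n * \<bar>w n\<bar> powr q * ln (\<bar>w n\<bar> powr r)) summable_on UNIV"
proof (rule summable_on_abs_bound)
  define L1 where "L1 = s powr q * r * \<bar>ln s\<bar> + t powr q * r * \<bar>ln t\<bar>"
  define L2 where "L2 = s powr q + t powr q"
  show "(\<lambda>n. L1 * (c n * \<bar>u n\<bar> powr q) + L2 * \<bar>c n * \<bar>u n\<bar> powr q * ln (\<bar>u n\<bar> powr r)\<bar>)
      summable_on UNIV"
    using assms(7) summable_on_iff_abs_summable_on_real
    by (intro summable_on_add summable_on_cmult_right assms(6)) force
  fix n
  have scaled: "\<bar>c n * (\<sigma> * \<bar>u n\<bar>) powr q * ln ((\<sigma> * \<bar>u n\<bar>) powr r)\<bar>
      \<le> L1 * (c n * \<bar>u n\<bar> powr q) + L2 * \<bar>c n * \<bar>u n\<bar> powr q * ln (\<bar>u n\<bar> powr r)\<bar>"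
    if "\<sigma> = s \<or> \<sigma> = t" for \<sigma>
  proof -
    have "\<sigma> \<ge> 0" "\<sigma> powr q * r * \<bar>ln \<sigma>\<bar> \<le> L1" "\<sigma> powr q \<le> L2"
      using that assms(2-4) unfolding L1_def L2_def by auto
    moreover have "c n * \<bar>u n\<bar> powr q \<ge> 0"
      using assms(1)[of n] by simp
    ultimately show ?thesis
      using abs_log_term_scaled_le[of "\<bar>u n\<bar>" \<sigma> "c n" r q] assms(1,2)
      by (smt (verit) abs_ge_zero mult_right_mono)
  qed
  from assms(5)[of n] show "\<bar>c n * \<bar>w n\<bar> powr q * ln (\<bar>w n\<bar> powr r)\<bar>
      \<le> L1 * (c n * \<bar>u n\<bar> powr q) + L2 * \<bar>c n * \<bar>u n\<bar> powr q * ln (\<bar>u n\<bar> powr r)\<bar>"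
    using scaled by auto
qed

lemma abs_Theta_sum_le:
  assumes "\<bar>x\<bar> \<le> \<bar>z\<bar>" "\<bar>y\<bar> \<le> \<bar>z\<bar>"
  shows "\<bar>Theta_sum p K s t x y\<bar>
       \<le> (\<Sum>i = 1..K - 1. \<Sum>j = 1..i - 1. 2 ^ (i - j) * \<bar>Theta p K s t i j\<bar>) * \<bar>z\<bar> ^ (2 * K)"
proof -
  have "\<bar>2 ^ (i - j) * \<bar>x ^ (2 * K - (i + j)) * y ^ (i + j)\<bar> * Theta p K s t i j\<bar>
      \<le> 2 ^ (i - j) * \<bar>Theta p K s t i j\<bar> * \<bar>z\<bar> ^ (2 * K)"
    if "i \<in> {1..K - 1}" "j \<in> {1..i - 1}" for i j
  proof -
    have "\<bar>x ^ (2 * K - (i + j)) * y ^ (i + j)\<bar> \<le> \<bar>z\<bar> ^ (2 * K - (i + j)) * \<bar>z\<bar> ^ (i + j)"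
      unfolding abs_mult power_abs using assms by (intro mult_mono power_mono) auto
    also have "2 * K - (i + j) + (i + j) = 2 * K"
      using that by auto
    then have "\<bar>z\<bar> ^ (2 * K - (i + j)) * \<bar>z\<bar> ^ (i + j) = \<bar>z\<bar> ^ (2 * K)"
      by (metis power_add)
    finally have "\<bar>x ^ (2 * K - (i + j)) * y ^ (i + j)\<bar> \<le> \<bar>z\<bar> ^ (2 * K)" .
    then have "2 ^ (i - j) * (\<bar>Theta p K s t i j\<bar> * \<bar>x ^ (2 * K - (i + j)) * y ^ (i + j)\<bar>)
        \<le> 2 ^ (i - j) * (\<bar>Theta p K s t i j\<bar> * \<bar>z\<bar> ^ (2 * K))"
      by (intro mult_left_mono) auto
    then show ?thesis
      by (simp add: abs_mult mult_ac)
  qed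
  then have "\<bar>Theta_sum p K s t x y\<bar>
      \<le> (\<Sum>i = 1..K - 1. \<Sum>j = 1..i - 1. 2 ^ (i - j) * \<bar>Theta p K s t i j\<bar> * \<bar>z\<bar> ^ (2 * K))"
    unfolding Theta_sum_def by (intro order.trans[OF sum_abs] sum_mono order.trans[OF sum_abs]) auto
  then show ?thesis
    by (simp add: sum_distrib_right)
qed

lemma Theta_sum_summable:
  assumes K: "K \<ge> 1" and p: "p = 2 * real K" and ab: "\<And>n. a n \<ge> 0" "\<And>n. b n \<ge> 0"
    and "Eterm a b p u summable_on UNIV"
  shows "(\<lambda>n. a n * Theta_sum p K s t (Delta (posp u) n) (Delta (negp u) n)) summable_on UNIV"
proof (rule summable_on_abs_bound)
  define C where "C = (\<Sum>i = 1..K - 1. \<Sum>j = 1..i - 1. 2 ^ (i - j) * \<bar>Theta p K s t i j\<bar>)"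
  show "(\<lambda>n. C * Eterm a b p u n) summable_on UNIV"
    using assms(5) by (rule summable_on_cmult_right)
  fix n
  have "C \<ge> 0" unfolding C_def by (intro sum_nonneg) auto
  have "\<bar>a n * Theta_sum p K s t (Delta (posp u) n) (Delta (negp u) n)\<bar> \<le> a n * (C * \<bar>Delta u n\<bar> ^ (2 * K))"
    unfolding abs_mult C_def using abs_Theta_sum_le[OF abs_Delta_posp_le abs_Delta_negp_le] ab(1)[of n]
    by (simp add: mult_left_mono)
  also have "\<bar>Delta u n\<bar> ^ (2 * K) = \<bar>Delta u n\<bar> powr p"
    using abs_powr_even_eq_power[OF K, of "Delta u n"] power_even_abs[of "2 * K" "Delta u n"] p by simp
  also have "a n * (C * \<bar>Delta u n\<bar> powr p) \<le> C * Eterm a b p u n"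
    using \<open>C \<ge> 0\<close> ab(2)[of n] unfolding Eterm_def by (simp add: algebra_simps)
  finally show "\<bar>a n * Theta_sum p K s t (Delta (posp u) n) (Delta (negp u) n)\<bar> \<le> C * Eterm a b p u n" .
qed

lemma abs_scaled_split_le: "s \<ge> 0 \<Longrightarrow> t \<ge> 0 \<Longrightarrow> \<bar>s * posp u n + t * negp u n\<bar> \<le> (s + t) * \<bar>u n\<bar>"
  and abs_Delta_scaled_split_le: "s \<ge> 0 \<Longrightarrow> t \<ge> 0 \<Longrightarrow>
    \<bar>Delta (\<lambda>n. s * posp u n + t * negp u n) n\<bar> \<le> (s + t) * \<bar>Delta u n\<bar>"
  and abs_scaled_split_cases: "s \<ge> 0 \<Longrightarrow> t \<ge> 0 \<Longrightarrow>
    \<bar>s * posp u n + t * negp u n\<bar> = s * \<bar>u n\<bar> \<or> \<bar>s * posp u n + t * negp u n\<bar> = t * \<bar>u n\<bar>"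
proof -
  assume st: "s \<ge> 0" "t \<ge> 0"
  have "\<bar>s * x + t * y\<bar> \<le> (s + t) * \<bar>z\<bar>" if "\<bar>x\<bar> \<le> \<bar>z\<bar>" "\<bar>y\<bar> \<le> \<bar>z\<bar>" for x y z :: real
  proof -
    have "\<bar>s * x + t * y\<bar> \<le> s * \<bar>x\<bar> + t * \<bar>y\<bar>"
      using st abs_triangle_ineq[of "s * x" "t * y"] by (simp add: abs_mult)
    also have "\<dots> \<le> s * \<bar>z\<bar> + t * \<bar>z\<bar>"
      using st that by (intro add_mono mult_left_mono) auto
    finally show ?thesis by (simp add: algebra_simps)
  qed
  then show "\<bar>s * posp u n + t * negp u n\<bar> \<le> (s + t) * \<bar>u n\<bar>"
    "\<bar>Delta (\<lambda>n. s * posp u n + t * negp u n) n\<bar> \<le> (s + t) * \<bar>Delta u n\<bar>"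
    unfolding Delta_lincomb by (simp_all add: abs_posp_le abs_negp_le abs_Delta_posp_le abs_Delta_negp_le)
  show "\<bar>s * posp u n + t * negp u n\<bar> = s * \<bar>u n\<bar> \<or> \<bar>s * posp u n + t * negp u n\<bar> = t * \<bar>u n\<bar>"
    using st by (cases "u n \<ge> 0") (simp_all add: posp_def negp_def abs_mult)
qed

lemma has_sum_I_density_scaled_split:
  fixes p q r s t :: real and a b c u :: "int \<Rightarrow> real"
  assumes "p > 0" "q \<ge> 0" "r \<ge> 0" and abc: "\<And>n. a n \<ge> 0" "\<And>n. b n \<ge> 0" "\<And>n. c n \<ge> 0"
    and st: "s \<ge> 0" "t \<ge> 0"
    and E: "Eterm a b p u summable_on UNIV" and C: "(\<lambda>n. c n * \<bar>u n\<bar> powr q) summable_on UNIV"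
    and L: "(\<lambda>n. c n * \<bar>u n\<bar> powr q * ln (\<bar>u n\<bar> powr r)) summable_on UNIV"
  defines "v \<equiv> \<lambda>n. s * posp u n + t * negp u n"
  shows "(I_density a b c p q r v has_sum Ifun a b c p q r v) UNIV"
proof -
  have "\<bar>v n\<bar> \<le> (s + t) * \<bar>u n\<bar>" "\<bar>Delta v n\<bar> \<le> (s + t) * \<bar>Delta u n\<bar>"
    "\<bar>v n\<bar> = s * \<bar>u n\<bar> \<or> \<bar>v n\<bar> = t * \<bar>u n\<bar>" for n
    unfolding v_def using abs_scaled_split_le abs_Delta_scaled_split_le abs_scaled_split_cases st
    by blast+
  then show ?thesis
    using assms
    by (intro has_sum_I_density Eterm_summable_dominated[where C = "s + t", OF _ _ _ _ _ _ E]
        c_powr_summable_dominated[where C = "s + t", OF _ _ _ _ C]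
        log_term_summable_scaled[OF _ _ st _ C L]) auto
qed

lemma Ifun_lower_bound:
  fixes p q r s t :: real and a b c u :: "int \<Rightarrow> real"
  assumes K: "K \<ge> 1" and p: "p = 2 * real K" and pq: "p < q" and r: "r \<ge> 1"
    and abc: "\<And>n. a n \<ge> 0" "\<And>n. b n \<ge> 0" "\<And>n. c n \<ge> 0" and c: "c summable_on UNIV"
    and u: "inD a b c p q r u" and st: "s \<ge> 0" "t \<ge> 0"
  defines "v \<equiv> \<lambda>n. s * posp u n + t * negp u n"
  shows "Ifun a b c p q r v
         + (1 - s powr q) / q * dI a b c p q r u (posp u)
         + (1 - t powr q) / q * dI a b c p q r u (negp u)
         + ((1 - s powr p) / p - (1 - s powr q) / q) * normE a b p (posp u) powr p
         + ((1 - t powr p) / p - (1 - t powr q) / q) * normE a b p (negp u) powr p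
         + (\<Sum>\<^sub>\<infinity>n. a n * Theta_sum p K s t (Delta (posp u) n) (Delta (negp u) n))
       \<le> Ifun a b c p q r u"
proof -
  have "p > 0" "q \<ge> 0" "r \<ge> 0" using p pq r K by auto
  have E: "Eterm a b p u summable_on UNIV"
    and L: "(\<lambda>n. c n * \<bar>u n\<bar> powr q * ln (\<bar>u n\<bar> powr r)) summable_on UNIV"
    using u unfolding inD_def inE_def by auto
  have C: "(\<lambda>n. c n * \<bar>u n\<bar> powr q) summable_on UNIV"
    using summable_on_c_abs_powr[OF c abc(3) \<open>q \<ge> 0\<close> r L] .
  have hv: "(I_density a b c p q r v has_sum Ifun a b c p q r v) UNIV"
    unfolding v_def using has_sum_I_density_scaled_split[OF \<open>p > 0\<close> \<open>q \<ge> 0\<close> \<open>r \<ge> 0\<close> abc st E C L] .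
  have hE: "(Eterm a b p w has_sum normE a b p w powr p) UNIV"
    if "\<And>n. \<bar>w n\<bar> \<le> \<bar>u n\<bar>" "\<And>n. \<bar>Delta w n\<bar> \<le> \<bar>Delta u n\<bar>" for w
    using that abc \<open>p > 0\<close>
    by (intro has_sum_normE_powr Eterm_summable_dominated[where C = 1, OF _ _ _ _ _ _ E]) auto
  note hdI = has_sum_dI_density[OF abc E L]
  note hT = has_sum_infsum[OF Theta_sum_summable[OF K p abc(1,2) E]]
  have hu: "(I_density a b c p q r u has_sum Ifun a b c p q r u) UNIV"
    using abc \<open>p > 0\<close> by (intro has_sum_I_density E C L)
  show ?thesis
    using has_sum_add[OF has_sum_add[OF has_sum_add[OF has_sum_add[OF has_sum_add[OF hv
          has_sum_cmult_right[OF hdI[OF abs_posp_le abs_Delta_posp_le]]]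
          has_sum_cmult_right[OF hdI[OF abs_negp_le abs_Delta_negp_le]]]
          has_sum_cmult_right[OF hE[OF abs_posp_le abs_Delta_posp_le]]]
          has_sum_cmult_right[OF hE[OF abs_negp_le abs_Delta_negp_le]]] hT]
    unfolding v_def
    by (rule has_sum_mono[OF _ hu]) (rule I_density_pointwise_ineq[OF K p pq \<open>r \<ge> 0\<close> abc st])
qed

theorem lemma2p2:
  fixes p q r :: real and a b c :: "int \<Rightarrow> real"
  assumes hp: "1 < p" "p < q"
    and hp2: "p / 2 \<in> \<nat>" "p / 2 > 0"
    and hr: "r \<ge> 1"
    and ha: "\<And>n. a n > 0" and hb: "\<And>n. b n > 0" and hc: "\<And>n. c n > 0"
    and C1: "\<exists>b0>0. \<forall>n. b n \<ge> b0" "filterlim b at_top (sup at_top at_bot)"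
    and C2: "\<exists>c0>0. \<forall>n. c n \<le> c0" "c summable_on UNIV"
  shows "\<forall>u s t. inD a b c p q r u \<and> s \<ge> 0 \<and> t \<ge> 0 \<longrightarrow>
    (let K = nat \<lfloor>p / 2\<rfloor>; up = posp u; un = negp u in
      Ifun a b c p q r u \<ge>
        Ifun a b c p q r (\<lambda>n. s * up n + t * un n)
        + (1 - s powr q) / q * dI a b c p q r u up
        + (1 - t powr q) / q * dI a b c p q r u un
        + ((1 - s powr p) / p - (1 - s powr q) / q) * normE a b p up powr p
        + ((1 - t powr p) / p - (1 - t powr q) / q) * normE a b p un powr p
        + (\<Sum>\<^sub>\<infinity>n. a n * (\<Sum>i = 1..K - 1. \<Sum>j = 1..i - 1.
              2 ^ (i - j) * \<bar>Delta up n ^ (2 * K - (i + j)) * Delta un n ^ (i + j)\<bar>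
              * Theta p K s t i j))
      \<and> (\<forall>i \<in> {1..K - 1}. \<forall>j \<in> {1..i - 1}. Theta p K s t i j \<ge> 0))"
proof -
  obtain K :: nat where "p / 2 = real K"
    using hp2(1) by (auto elim: Nats_cases)
  then have K: "K \<ge> 1" and p: "p = 2 * real K" and "nat \<lfloor>p / 2\<rfloor> = K"
    using hp2(2) by auto
  have abc: "\<And>n. a n \<ge> 0" "\<And>n. b n \<ge> 0" "\<And>n. c n \<ge> 0"
    using ha hb hc by (simp_all add: order_less_imp_le)
  show ?thesis
    unfolding Let_def \<open>nat \<lfloor>p / 2\<rfloor> = K\<close>
    using Ifun_lower_bound[OF K p hp(2) hr abc C2(2)] Theta_nonneg p
    by (auto simp: Theta_sum_def)
qed

end
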